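(* Consider iterative self-improvement with binary reward $s(q,a)\in\{0,1\}$, where at each iteration $t$ one samples $n$ questions $q\sim p_0$, generates one answer $a\sim \pi_{\hat\theta_t}(\cdot\mid q)$ per question, keeps the $n_t\le n$ pairs with $s(q,a)=1$, and sets $\hat\theta_{t+1}$ to the maximum-likelihood estimate over a finite model class $\Pi$ on these accepted pairs; $V_{p_0}(\theta):=\mathbb{E}_{q\sim p_0,\,a\sim\pi_\theta(\cdot\mid q)}[s(q,a)]$ denotes the expected reward. Assume there exist $c\in(0,1)$ and $\gamma\ge 0$ such that for any question distribution $p$ and any model $\theta$ in a small neighborhood $\Theta$ of the pretrained initialization, $\Pr_{q\sim p}[\alpha(\theta,q)<c\,V_p(\theta)]\le\gamma$, where $\alpha(\theta,q):=\Pr_{a\sim\pi_\theta(\cdot\mid q)}[s(q,a)=1]$. Define \[ F(x):=1-\gamma-\frac{c_\delta \nu}{c\sqrt{x-c_{\delta'}\nu}}\quad\text{on } x>c_{\delta'}\nu, \] with $\nu:=\sqrt{1/n}$, $c_\delta:=\sqrt{2\log(|\Pi|\,\delta^{-1})}$, $c_{\delta'}:=\sqrt{\log(\delta'^{-1})/2}$ (so that, with probability at least $1-t(\delta+\delta')$, $V_{p_0}(\hat\theta_t)\ge F^{\circ t}(V_{p_0}(\hat\theta_0))$, where $F^{\circ t}$ is the $t$-fold composition of $F$). Let $\nu$ be sufficiently small such that \[ 0<\frac{c_\delta \nu}{c\,(1-\gamma-c_{\delta'}\nu)^{3/2}}<\frac{2}{3\sqrt{3}}. \] Let $\mathcal I(1,\nu)=(x_-(1,\nu),x_+(1,\nu))\subset(c_{\delta'}\nu,\,1-\gamma)$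 be the open interval whose endpoints $x_-(1,\nu)<x_+(1,\nu)$ are the two solutions of the fixed-point equation $F(x)=x$. Then, for any non-negative integer $t$, $F^{\circ(t+1)}(V_{p_0}(\hat\theta_0))>F^{\circ t}(V_{p_0}(\hat\theta_0))$ and $F^{\circ t}(V_{p_0}(\hat\theta_0))\in\mathcal I(1,\nu)$ hold if and only if $V_{p_0}(\hat\theta_0)\in\mathcal I(1,\nu)$. Moreover, $x_-(1,\nu)$ is increasing in $\nu$, $x_+(1,\nu)$ is decreasing in $\nu$, and the interval length $|\mathcal I(1,\nu)|=x_+(1,\nu)-x_-(1,\nu)$ is decreasing in $\nu$ and satisfies \[ |\mathcal I(1,\nu)|\;\ge\;(1-\gamma-c_{\delta'}\nu)-\frac{3\sqrt3}{2}\cdot\frac{c_\delta \nu}{c\sqrt{\,1-\gamma-c_{\delta'}\nu\,}}. \]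
   Context: Setting of iterative self-improvement for mathematical reasoning with binary verifiable reward; the previous result (Corollary 4.4) gives the high-probability lower bound $V_{p_0}(\hat\theta_{t+1})\ge F(V_{p_0}(\hat\theta_t))$ and its iterated version. *)

theory Defs
  imports Complex_Main
begin

definition cdelta :: "nat \<Rightarrow> real \<Rightarrow> real" where
  "cdelta N \<delta> = sqrt (2 * ln (real N / \<delta>))"

definition cdelta' :: "real \<Rightarrow> real" where
  "cdelta' \<delta>' = sqrt (ln (1 / \<delta>') / 2)"

text \<open>F(x) = 1 - gamma - c_delta nu / (c sqrt(x - c_delta' nu)), meant on x > c_delta' nu
  (outside that domain the value is the HOL-totalised one).\<close>
definition Fmap :: "real \<Rightarrow> real \<Rightarrow> real \<Rightarrow> real \<Rightarrow> real \<Rightarrow> real \<Rightarrow> real" where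
  "Fmap \<gamma> c cd cd' \<nu> x = 1 - \<gamma> - cd * \<nu> / (c * sqrt (x - cd' * \<nu>))"

definition fixpts :: "real \<Rightarrow> real \<Rightarrow> real \<Rightarrow> real \<Rightarrow> real \<Rightarrow> real set" where
  "fixpts \<gamma> c cd cd' \<nu> = {x. cd' * \<nu> < x \<and> Fmap \<gamma> c cd cd' \<nu> x = x}"

definition xminus :: "real \<Rightarrow> real \<Rightarrow> real \<Rightarrow> real \<Rightarrow> real \<Rightarrow> real" where
  "xminus \<gamma> c cd cd' \<nu> = Min (fixpts \<gamma> c cd cd' \<nu>)"

definition xplus :: "real \<Rightarrow> real \<Rightarrow> real \<Rightarrow> real \<Rightarrow> real \<Rightarrow> real" where
  "xplus \<gamma> c cd cd' \<nu> = Max (fixpts \<gamma> c cd cd' \<nu>)"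

definition nu_cond :: "real \<Rightarrow> real \<Rightarrow> real \<Rightarrow> real \<Rightarrow> real \<Rightarrow> bool" where
  "nu_cond \<gamma> c cd cd' \<nu> \<longleftrightarrow>
     0 < cd * \<nu> / (c * sqrt (1 - \<gamma> - cd' * \<nu>) ^ 3) \<and>
     cd * \<nu> / (c * sqrt (1 - \<gamma> - cd' * \<nu>) ^ 3) < 2 / (3 * sqrt 3)"

end

(* Write x = cd' nu + t^2 with t > 0, L = 1 - gamma - cd' nu and b = cd nu / c. Then
   F x - x = -(t^3 - L t + b) / t, and the smallness condition on nu says b < 2 (L/3)^(3/2),
   so the depressed cubic t^3 - L t + b has two positive roots s1 < s2 (the third one is
   -(s1 + s2)). Hence the fixed points of F are cd' nu + s1^2 < cd' nu + s2^2, and F x > x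
   exactly between them. Since F is increasing on its domain and stays above 1 - gamma off it,
   the open interval between the fixed points is invariant and nothing outside it is mapped
   into it. Raising nu lowers F pointwise, which moves both fixed points inwards. The length
   bound is an inequality between L = s1^2 + s1 s2 + s2^2 and b = s1 s2 (s1 + s2). *)

theory Submission
  imports Defs
begin

lemma cdelta_pos:
  assumes "1 \<le> N" "0 < \<delta>" "\<delta> < 1"
  shows "0 < cdelta N \<delta>"
proof -
  have "1 < real N / \<delta>"
    using assms by (simp add: field_simps)
  then show ?thesis
    by (simp add: cdelta_def)
qed

lemma cdelta'_nonneg:
  assumes "0 < \<delta>'" "\<delta>' \<le> 1"
  shows "0 \<le> cdelta' \<delta>'"
  using assms by (simp add: cdelta'_def)

lemma depressed_cubic_two_positive_roots:
  fixes m b :: real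
  assumes m: "0 < m" and b: "0 < b" "b < 2 * m^3"
  obtains s1 s2 where "0 < s1" "s1 < s2" "s1^2 + s1*s2 + s2^2 = 3 * m^2" "b = s1 * s2 * (s1 + s2)"
proof -
  define G where "G s = s^3 - 3 * m^2 * s + b" for s :: real
  have cont: "\<forall>s. isCont G s"
    unfolding G_def by (auto intro!: continuous_intros)
  have G0: "G 0 > 0" and Gm: "G m < 0" and G2m: "G (2 * m) > 0"
    using b by (simp_all add: G_def power3_eq_cube power2_eq_square algebra_simps)
  obtain s1 where "0 \<le> s1" "s1 \<le> m" "G s1 = 0"
    using IVT2[of G m 0 0] G0 Gm m cont by force
  then have s1: "0 < s1" "s1 < m" "G s1 = 0"
    using G0 Gm by (auto simp: order.order_iff_strict)
  obtain s2 where "m \<le> s2" "s2 \<le> 2 * m" "G s2 = 0"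
    using IVT[of G m 0 "2 * m"] Gm G2m m cont by force
  then have s2: "m < s2" "G s2 = 0"
    using Gm by (auto simp: order.order_iff_strict)
  have "(s1 - s2) * (s1^2 + s1*s2 + s2^2 - 3 * m^2) = G s1 - G s2"
    by (simp add: G_def algebra_simps power2_eq_square power3_eq_cube)
  then have sum: "s1^2 + s1*s2 + s2^2 = 3 * m^2"
    using s1 s2 by simp
  have "b = 3 * m^2 * s1 - s1^3"
    using s1(3) by (simp add: G_def)
  also have "\<dots> = s1 * s2 * (s1 + s2)"
    unfolding sum[symmetric] by (simp add: algebra_simps power2_eq_square power3_eq_cube)
  finally show thesis
    using that[of s1 s2] s1 s2 sum by force
qed

lemma Fmap_eq_divide:
  "Fmap \<gamma> c cd cd' \<nu> x = 1 - \<gamma> - (cd * \<nu> / c) / sqrt (x - cd' * \<nu>)"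
  by (simp add: Fmap_def)

lemma funpow_mem_iff:
  assumes "\<And>x. f x \<in> S \<longleftrightarrow> x \<in> S"
  shows "(f ^^ n) x \<in> S \<longleftrightarrow> x \<in> S"
  using assms by (induction n) auto

lemma obtain_shift_sq:
  fixes a x :: real
  assumes "a < x"
  obtains t where "0 < t" "x = a + t^2"
  using assms by (intro that[of "sqrt (x - a)"]) auto

lemma cubic_roots_gap_bound:
  fixes s1 s2 :: real
  assumes s1: "0 < s1" and s12: "s1 < s2"
  defines "L \<equiv> s1^2 + s1 * s2 + s2^2"
  shows "L - 3 * sqrt 3 / 2 * (s1 * s2 * (s1 + s2) / sqrt L) \<le> s2^2 - s1^2"
proof -
  have L: "0 < L"
    using s1 s12 by (simp add: L_def add_pos_pos)
  have "((2 * s1 + s2) * sqrt L)^2 = (2 * s1 + s2)^2 * L"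
    using L by (simp add: power_mult_distrib)
  also have "\<dots> \<le> 27 / 4 * (s2 * (s1 + s2))^2"
  proof -
    have "27 / 4 * (s2 * (s1 + s2))^2 - (2 * s1 + s2)^2 * L
        = (s2 - s1) * (16 * s1^3 + 48 * s1^2 * s2 + 57 * s1 * s2^2 + 23 * s2^3) / 4"
      by (simp add: L_def algebra_simps power2_eq_square power3_eq_cube)
    moreover have "0 \<le> (s2 - s1) * (16 * s1^3 + 48 * s1^2 * s2 + 57 * s1 * s2^2 + 23 * s2^3)"
      using s1 s12 by (intro mult_nonneg_nonneg) auto
    ultimately show ?thesis
      by linarith
  qed
  also have "\<dots> = (3 * sqrt 3 / 2 * (s2 * (s1 + s2)))^2"
    by (simp add: power_mult_distrib power_divide)
  finally have "((2 * s1 + s2) * sqrt L)^2 \<le> (3 * sqrt 3 / 2 * (s2 * (s1 + s2)))^2" .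
  moreover have "0 \<le> 3 * sqrt 3 / 2 * (s2 * (s1 + s2))"
    using s1 s12 by simp
  ultimately have "(2 * s1 + s2) * sqrt L \<le> 3 * sqrt 3 / 2 * (s2 * (s1 + s2))"
    by (rule power2_le_imp_le)
  then have "2 * s1 + s2 \<le> 3 * sqrt 3 / 2 * (s2 * (s1 + s2)) / sqrt L"
    using L by (simp add: pos_le_divide_eq)
  then have "s1 * (2 * s1 + s2) \<le> s1 * (3 * sqrt 3 / 2 * (s2 * (s1 + s2)) / sqrt L)"
    by (rule mult_left_mono) (use s1 in simp)
  also have "\<dots> = 3 * sqrt 3 / 2 * (s1 * s2 * (s1 + s2) / sqrt L)"
    by (simp add: mult_ac)
  finally have "s1 * (2 * s1 + s2) \<le> 3 * sqrt 3 / 2 * (s1 * s2 * (s1 + s2) / sqrt L)" .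
  then show ?thesis
    by (simp add: L_def algebra_simps power2_eq_square)
qed

(* Vieta: s1, s2 and -(s1 + s2) are the roots of t^3 - (1 - gamma - cd' nu) t + cd nu / c. *)
locale Fmap_roots =
  fixes \<gamma> c cd cd' \<nu> s1 s2 :: real
  assumes s1_pos: "0 < s1" and s1_less_s2: "s1 < s2"
    and level_eq: "1 - \<gamma> - cd' * \<nu> = s1^2 + s1*s2 + s2^2"
    and gain_eq: "cd * \<nu> / c = s1 * s2 * (s1 + s2)"
begin

lemma gain_pos: "0 < cd * \<nu> / c"
  using s1_pos s1_less_s2 by (simp add: gain_eq)

lemma Fmap_shift_sq_minus_self:
  assumes "0 < t"
  shows "Fmap \<gamma> c cd cd' \<nu> (cd' * \<nu> + t^2) - (cd' * \<nu> + t^2)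
    = - ((t - s1) * (t - s2) * (t + s1 + s2)) / t"
proof -
  have "Fmap \<gamma> c cd cd' \<nu> (cd' * \<nu> + t^2) - (cd' * \<nu> + t^2)
      = (s1^2 + s1*s2 + s2^2) - t^2 - s1 * s2 * (s1 + s2) / t"
    using assms level_eq by (simp add: Fmap_eq_divide gain_eq)
  also have "\<dots> = - ((t - s1) * (t - s2) * (t + s1 + s2)) / t"
    using assms by (simp add: field_simps power2_eq_square)
  finally show ?thesis .
qed

lemma less_Fmap_shift_sq_iff:
  assumes "0 < t"
  shows "cd' * \<nu> + t^2 < Fmap \<gamma> c cd cd' \<nu> (cd' * \<nu> + t^2) \<longleftrightarrow> s1 < t \<and> t < s2"
proof -
  have "cd' * \<nu> + t^2 < Fmap \<gamma> c cd cd' \<nu> (cd' * \<nu> + t^2)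
      \<longleftrightarrow> 0 < - ((t - s1) * (t - s2) * (t + s1 + s2)) / t"
    using Fmap_shift_sq_minus_self[OF assms] by linarith
  also have "\<dots> \<longleftrightarrow> (t - s1) * (t - s2) * (t + s1 + s2) < 0"
    using assms by (simp add: divide_less_0_iff)
  also have "\<dots> \<longleftrightarrow> (t - s1) * (t - s2) < 0"
    using assms s1_pos s1_less_s2 by (simp add: mult_less_0_iff)
  also have "\<dots> \<longleftrightarrow> s1 < t \<and> t < s2"
    using s1_less_s2 by (auto simp: mult_less_0_iff)
  finally show ?thesis .
qed

lemma Fmap_shift_sq_fixed_iff:
  assumes "0 < t"
  shows "Fmap \<gamma> c cd cd' \<nu> (cd' * \<nu> + t^2) = cd' * \<nu> + t^2 \<longleftrightarrow> t = s1 \<or> t = s2"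
  using Fmap_shift_sq_minus_self[OF assms] assms s1_pos s1_less_s2 by auto

lemma less_Fmap_iff:
  assumes "cd' * \<nu> < x"
  shows "x < Fmap \<gamma> c cd cd' \<nu> x \<longleftrightarrow> cd' * \<nu> + s1^2 < x \<and> x < cd' * \<nu> + s2^2"
proof -
  obtain t where t: "0 < t" "x = cd' * \<nu> + t^2"
    using obtain_shift_sq[OF assms] .
  show ?thesis
    using less_Fmap_shift_sq_iff[OF t(1)] t s1_pos s1_less_s2
    by (simp add: power_mono_iff flip: not_le)
qed

lemma Fmap_fixed_iff:
  assumes "cd' * \<nu> < x"
  shows "Fmap \<gamma> c cd cd' \<nu> x = x \<longleftrightarrow> x = cd' * \<nu> + s1^2 \<or> x = cd' * \<nu> + s2^2"
proof -
  obtain t where t: "0 < t" "x = cd' * \<nu> + t^2"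
    using obtain_shift_sq[OF assms] .
  show ?thesis
    using Fmap_shift_sq_fixed_iff[OF t(1)] t s1_pos s1_less_s2 by auto
qed

lemma fixpts_eq: "fixpts \<gamma> c cd cd' \<nu> = {cd' * \<nu> + s1^2, cd' * \<nu> + s2^2}"
  using Fmap_fixed_iff s1_pos s1_less_s2 by (auto simp: fixpts_def)

lemma xminus_eq: "xminus \<gamma> c cd cd' \<nu> = cd' * \<nu> + s1^2"
  and xplus_eq: "xplus \<gamma> c cd cd' \<nu> = cd' * \<nu> + s2^2"
  using s1_pos s1_less_s2 by (simp_all add: xminus_def xplus_def fixpts_eq power_strict_mono)

lemma Fmap_strict_mono:
  assumes "cd' * \<nu> < x" "x < y"
  shows "Fmap \<gamma> c cd cd' \<nu> x < Fmap \<gamma> c cd cd' \<nu> y"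
proof -
  have "(cd * \<nu> / c) / sqrt (y - cd' * \<nu>) < (cd * \<nu> / c) / sqrt (x - cd' * \<nu>)"
    using assms gain_pos by (intro divide_strict_left_mono) auto
  then show ?thesis
    unfolding Fmap_eq_divide by linarith
qed

(* Off the domain the HOL square root is non-positive, so the subtracted term is too. *)
lemma Fmap_off_domain_ge:
  assumes "x \<le> cd' * \<nu>"
  shows "1 - \<gamma> \<le> Fmap \<gamma> c cd cd' \<nu> x"
proof -
  have "(cd * \<nu> / c) / sqrt (x - cd' * \<nu>) \<le> 0"
    using assms gain_pos by (intro divide_nonneg_nonpos) auto
  then show ?thesis
    unfolding Fmap_eq_divide by linarith
qed

lemma Fmap_mono:
  assumes "cd' * \<nu> < x" "x \<le> y"
  shows "Fmap \<gamma> c cd cd' \<nu> x \<le> Fmap \<gamma> c cd cd' \<nu> y"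
  using assms Fmap_strict_mono by (cases "x = y") (auto intro: less_imp_le)

lemma domain_less_xminus: "cd' * \<nu> < xminus \<gamma> c cd cd' \<nu>"
  using s1_pos by (simp add: xminus_eq)

lemma xminus_less_xplus: "xminus \<gamma> c cd cd' \<nu> < xplus \<gamma> c cd cd' \<nu>"
  using s1_pos s1_less_s2 by (simp add: xminus_eq xplus_eq power_strict_mono)

lemma xplus_less: "xplus \<gamma> c cd cd' \<nu> < 1 - \<gamma>"
proof -
  have "0 < s1^2 + s1 * s2"
    using s1_pos s1_less_s2 by (simp add: add_pos_pos)
  then show ?thesis
    using level_eq by (simp add: xplus_eq)
qed

lemma Fmap_xminus: "Fmap \<gamma> c cd cd' \<nu> (xminus \<gamma> c cd cd' \<nu>) = xminus \<gamma> c cd cd' \<nu>"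
  using Fmap_fixed_iff domain_less_xminus by (simp add: xminus_eq)

lemma Fmap_xplus: "Fmap \<gamma> c cd cd' \<nu> (xplus \<gamma> c cd cd' \<nu>) = xplus \<gamma> c cd cd' \<nu>"
  using Fmap_fixed_iff[OF less_trans[OF domain_less_xminus xminus_less_xplus]]
  by (simp add: xplus_eq)

lemma less_Fmap_on_interval:
  assumes "x \<in> {xminus \<gamma> c cd cd' \<nu><..<xplus \<gamma> c cd cd' \<nu>}"
  shows "x < Fmap \<gamma> c cd cd' \<nu> x"
proof -
  have "cd' * \<nu> < x"
    using assms domain_less_xminus by simp
  then show ?thesis
    using assms less_Fmap_iff by (simp add: xminus_eq xplus_eq)
qed

lemma Fmap_mem_interval_iff:
  "Fmap \<gamma> c cd cd' \<nu> x \<in> {xminus \<gamma> c cd cd' \<nu><..<xplus \<gamma> c cd cd' \<nu>}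
    \<longleftrightarrow> x \<in> {xminus \<gamma> c cd cd' \<nu><..<xplus \<gamma> c cd cd' \<nu>}"
  (is "?F x \<in> {?xm<..<?xp} \<longleftrightarrow> _")
proof
  assume x: "x \<in> {?xm<..<?xp}"
  then have "?F x < ?F ?xp"
    using domain_less_xminus by (intro Fmap_strict_mono) auto
  then show "?F x \<in> {?xm<..<?xp}"
    using x less_Fmap_on_interval[OF x] by (simp add: Fmap_xplus)
next
  assume Fx: "?F x \<in> {?xm<..<?xp}"
  consider "x \<le> cd' * \<nu>" | "cd' * \<nu> < x" "x \<le> ?xm" | "?xp \<le> x" | "x \<in> {?xm<..<?xp}"
    by fastforce
  then show "x \<in> {?xm<..<?xp}"
  proof cases
    case 1
    then show ?thesis
      using Fx Fmap_off_domain_ge xplus_less by fastforce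
  next
    case 2
    then show ?thesis
      using Fx Fmap_mono[of x ?xm] by (simp add: Fmap_xminus)
  next
    case 3
    then show ?thesis
      using Fx Fmap_mono[of ?xp x] domain_less_xminus xminus_less_xplus by (simp add: Fmap_xplus)
  qed
qed

lemma funpow_Fmap_increasing_iff:
  "(Fmap \<gamma> c cd cd' \<nu> ^^ t) v < (Fmap \<gamma> c cd cd' \<nu> ^^ Suc t) v
      \<and> (Fmap \<gamma> c cd cd' \<nu> ^^ t) v \<in> {xminus \<gamma> c cd cd' \<nu><..<xplus \<gamma> c cd cd' \<nu>}
    \<longleftrightarrow> v \<in> {xminus \<gamma> c cd cd' \<nu><..<xplus \<gamma> c cd cd' \<nu>}"
  using funpow_mem_iff[OF Fmap_mem_interval_iff] less_Fmap_on_interval by auto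

lemma fixpts_eq_xminus_xplus: "fixpts \<gamma> c cd cd' \<nu> = {xminus \<gamma> c cd cd' \<nu>, xplus \<gamma> c cd cd' \<nu>}"
  by (simp add: fixpts_eq xminus_eq xplus_eq)

lemma interval_length_ge:
  "(1 - \<gamma> - cd' * \<nu>) - 3 * sqrt 3 / 2 * (cd * \<nu> / (c * sqrt (1 - \<gamma> - cd' * \<nu>)))
    \<le> xplus \<gamma> c cd cd' \<nu> - xminus \<gamma> c cd cd' \<nu>"
  using cubic_roots_gap_bound[OF s1_pos s1_less_s2]
  by (simp add: level_eq gain_eq[symmetric] xminus_eq xplus_eq)

end

lemma nu_cond_obtains_Fmap_roots:
  assumes c: "0 < c" and cd: "0 < cd" and \<nu>: "0 < \<nu>" and nc: "nu_cond \<gamma> c cd cd' \<nu>"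
  obtains s1 s2 where "Fmap_roots \<gamma> c cd cd' \<nu> s1 s2"
proof -
  define r where "r = sqrt (1 - \<gamma> - cd' * \<nu>)"
  define b where "b = cd * \<nu> / c"
  have b: "0 < b"
    using c cd \<nu> by (simp add: b_def)
  have ratio: "0 < b / r^3" "b / r^3 < 2 / (3 * sqrt 3)"
    using nc by (simp_all add: nu_cond_def r_def b_def)
  then have "0 < r^3"
    using b by (simp add: zero_less_divide_iff)
  then have r: "0 < r"
    by simp
  define m where "m = r / sqrt 3"
  have m: "0 < m"
    using r by (simp add: m_def)
  have "b < 2 * m^3"
    using ratio r by (simp add: m_def field_simps power3_eq_cube)
  then obtain s1 s2 where "0 < s1" "s1 < s2" "s1^2 + s1*s2 + s2^2 = 3 * m^2" "b = s1 * s2 * (s1 + s2)"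
    using depressed_cubic_two_positive_roots[OF m b] by blast
  moreover have "3 * m^2 = 1 - \<gamma> - cd' * \<nu>"
    using r by (simp add: m_def power_divide r_def)
  ultimately have "Fmap_roots \<gamma> c cd cd' \<nu> s1 s2"
    by (simp add: Fmap_roots_def b_def)
  then show thesis
    by (rule that)
qed

lemma Fmap_strict_antimono_nu:
  assumes "0 < c" "0 < cd" "0 \<le> cd'" "0 \<le> \<nu>1" "\<nu>1 < \<nu>2" "cd' * \<nu>2 < x"
  shows "Fmap \<gamma> c cd cd' \<nu>2 x < Fmap \<gamma> c cd cd' \<nu>1 x"
proof -
  have "0 < sqrt (x - cd' * \<nu>2)" "sqrt (x - cd' * \<nu>2) \<le> sqrt (x - cd' * \<nu>1)"
    using assms by (auto intro: mult_left_mono)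
  then have "cd * \<nu>1 / (c * sqrt (x - cd' * \<nu>1)) < cd * \<nu>2 / (c * sqrt (x - cd' * \<nu>2))"
    using assms by (intro frac_less) (auto intro: mult_left_mono)
  then show ?thesis
    by (simp add: Fmap_def)
qed

lemma fixpt_interval_shrinks_nu:
  assumes c: "0 < c" and cd: "0 < cd" and cd': "0 \<le> cd'" and \<nu>: "0 < \<nu>1" "\<nu>1 < \<nu>2"
    and nc: "nu_cond \<gamma> c cd cd' \<nu>1" "nu_cond \<gamma> c cd cd' \<nu>2"
  shows "xminus \<gamma> c cd cd' \<nu>1 < xminus \<gamma> c cd cd' \<nu>2
    \<and> xplus \<gamma> c cd cd' \<nu>2 < xplus \<gamma> c cd cd' \<nu>1
    \<and> xplus \<gamma> c cd cd' \<nu>2 - xminus \<gamma> c cd cd' \<nu>2 < xplus \<gamma> c cd cd' \<nu>1 - xminus \<gamma> c cd cd' \<nu>1"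
proof -
  obtain u1 u2 where "Fmap_roots \<gamma> c cd cd' \<nu>1 u1 u2"
    using nu_cond_obtains_Fmap_roots[OF c cd \<nu>(1) nc(1)] .
  then interpret R1: Fmap_roots \<gamma> c cd cd' \<nu>1 u1 u2 .
  obtain w1 w2 where "Fmap_roots \<gamma> c cd cd' \<nu>2 w1 w2"
    using nu_cond_obtains_Fmap_roots[OF c cd _ nc(2)] \<nu> by auto
  then interpret R2: Fmap_roots \<gamma> c cd cd' \<nu>2 w1 w2 .
  have fixpt_in_interval: "x \<in> {xminus \<gamma> c cd cd' \<nu>1<..<xplus \<gamma> c cd cd' \<nu>1}"
    if "cd' * \<nu>2 < x" "Fmap \<gamma> c cd cd' \<nu>2 x = x" for x
  proof -
    have "cd' * \<nu>1 \<le> cd' * \<nu>2"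
      using cd' \<nu> by (intro mult_left_mono) auto
    then have "cd' * \<nu>1 < x"
      using that(1) by linarith
    moreover have "Fmap \<gamma> c cd cd' \<nu>2 x < Fmap \<gamma> c cd cd' \<nu>1 x"
      using Fmap_strict_antimono_nu[OF c cd cd' _ \<nu>(2) that(1)] \<nu>(1) by simp
    ultimately show ?thesis
      using R1.less_Fmap_iff that(2) by (simp add: R1.xminus_eq R1.xplus_eq)
  qed
  have "xminus \<gamma> c cd cd' \<nu>2 \<in> {xminus \<gamma> c cd cd' \<nu>1<..<xplus \<gamma> c cd cd' \<nu>1}"
    by (rule fixpt_in_interval[OF R2.domain_less_xminus R2.Fmap_xminus])
  moreover have "xplus \<gamma> c cd cd' \<nu>2 \<in> {xminus \<gamma> c cd cd' \<nu>1<..<xplus \<gamma> c cd cd' \<nu>1}"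
    by (rule fixpt_in_interval[OF less_trans[OF R2.domain_less_xminus R2.xminus_less_xplus] R2.Fmap_xplus])
  ultimately show ?thesis
    by auto
qed

theorem proposition4p5:
  fixes \<Pi> :: "'m set" and \<delta> \<delta>' \<gamma> c \<nu> v0 :: real
  assumes "finite \<Pi>" and "\<Pi> \<noteq> {}"
    and "0 < \<delta>" and "\<delta> < 1" and "0 < \<delta>'" and "\<delta>' < 1"
    and "0 < c" and "c < 1" and "0 \<le> \<gamma>"
    and "0 < \<nu>"
    and "nu_cond \<gamma> c (cdelta (card \<Pi>) \<delta>) (cdelta' \<delta>') \<nu>"
    and "0 \<le> v0" and "v0 \<le> 1"
  shows
    "fixpts \<gamma> c (cdelta (card \<Pi>) \<delta>) (cdelta' \<delta>') \<nu>
        = {xminus \<gamma> c (cdelta (card \<Pi>) \<delta>) (cdelta' \<delta>') \<nu>,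
           xplus \<gamma> c (cdelta (card \<Pi>) \<delta>) (cdelta' \<delta>') \<nu>}
     \<and> cdelta' \<delta>' * \<nu> < xminus \<gamma> c (cdelta (card \<Pi>) \<delta>) (cdelta' \<delta>') \<nu>
     \<and> xminus \<gamma> c (cdelta (card \<Pi>) \<delta>) (cdelta' \<delta>') \<nu>
         < xplus \<gamma> c (cdelta (card \<Pi>) \<delta>) (cdelta' \<delta>') \<nu>
     \<and> xplus \<gamma> c (cdelta (card \<Pi>) \<delta>) (cdelta' \<delta>') \<nu> < 1 - \<gamma>
     \<and> (\<forall>t::nat.
          ((Fmap \<gamma> c (cdelta (card \<Pi>) \<delta>) (cdelta' \<delta>') \<nu> ^^ t) v0
              < (Fmap \<gamma> c (cdelta (card \<Pi>) \<delta>) (cdelta' \<delta>') \<nu> ^^ Suc t) v0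
           \<and> (Fmap \<gamma> c (cdelta (card \<Pi>) \<delta>) (cdelta' \<delta>') \<nu> ^^ t) v0
               \<in> {xminus \<gamma> c (cdelta (card \<Pi>) \<delta>) (cdelta' \<delta>') \<nu> <..<
                   xplus \<gamma> c (cdelta (card \<Pi>) \<delta>) (cdelta' \<delta>') \<nu>})
          \<longleftrightarrow> v0 \<in> {xminus \<gamma> c (cdelta (card \<Pi>) \<delta>) (cdelta' \<delta>') \<nu> <..<
                    xplus \<gamma> c (cdelta (card \<Pi>) \<delta>) (cdelta' \<delta>') \<nu>})
     \<and> (\<forall>\<nu>1 \<nu>2. 0 < \<nu>1 \<longrightarrow> \<nu>1 < \<nu>2
          \<longrightarrow> nu_cond \<gamma> c (cdelta (card \<Pi>) \<delta>) (cdelta' \<delta>') \<nu>1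
          \<longrightarrow> nu_cond \<gamma> c (cdelta (card \<Pi>) \<delta>) (cdelta' \<delta>') \<nu>2
          \<longrightarrow> xminus \<gamma> c (cdelta (card \<Pi>) \<delta>) (cdelta' \<delta>') \<nu>1
                < xminus \<gamma> c (cdelta (card \<Pi>) \<delta>) (cdelta' \<delta>') \<nu>2
            \<and> xplus \<gamma> c (cdelta (card \<Pi>) \<delta>) (cdelta' \<delta>') \<nu>2
                < xplus \<gamma> c (cdelta (card \<Pi>) \<delta>) (cdelta' \<delta>') \<nu>1
            \<and> xplus \<gamma> c (cdelta (card \<Pi>) \<delta>) (cdelta' \<delta>') \<nu>2
                - xminus \<gamma> c (cdelta (card \<Pi>) \<delta>) (cdelta' \<delta>') \<nu>2
              < xplus \<gamma> c (cdelta (card \<Pi>) \<delta>) (cdelta' \<delta>') \<nu>1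
                - xminus \<gamma> c (cdelta (card \<Pi>) \<delta>) (cdelta' \<delta>') \<nu>1)
     \<and> xplus \<gamma> c (cdelta (card \<Pi>) \<delta>) (cdelta' \<delta>') \<nu>
         - xminus \<gamma> c (cdelta (card \<Pi>) \<delta>) (cdelta' \<delta>') \<nu>
       \<ge> (1 - \<gamma> - cdelta' \<delta>' * \<nu>)
         - 3 * sqrt 3 / 2 * (cdelta (card \<Pi>) \<delta> * \<nu>
              / (c * sqrt (1 - \<gamma> - cdelta' \<delta>' * \<nu>)))"
proof -
  define cd where "cd = cdelta (card \<Pi>) \<delta>"
  define cd' where "cd' = cdelta' \<delta>'"
  have cd: "0 < cd"
    unfolding cd_def using assms(1-4) by (intro cdelta_pos) (auto simp: Suc_le_eq card_gt_0_iff)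
  have cd': "0 \<le> cd'"
    unfolding cd'_def using assms(5,6) by (intro cdelta'_nonneg) auto
  obtain s1 s2 where "Fmap_roots \<gamma> c cd cd' \<nu> s1 s2"
    using nu_cond_obtains_Fmap_roots[OF assms(7) cd assms(10) assms(11)[folded cd_def cd'_def]] .
  then interpret Fmap_roots \<gamma> c cd cd' \<nu> s1 s2 .
  show ?thesis
    unfolding cd_def[symmetric] cd'_def[symmetric]
    using fixpts_eq_xminus_xplus domain_less_xminus xminus_less_xplus xplus_less
      funpow_Fmap_increasing_iff interval_length_ge
      fixpt_interval_shrinks_nu[OF assms(7) cd cd'] by blast
qed

end
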